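(* Let $G=(V,E)$ be an $n$-vertex graph with at least one edge, and define $$\delta_1(G)=\min_{uv\in E}|N(u)\cup N(v)|,\qquad \delta_2(G)=\max_{uv\in E}|N(u)\cup N(v)|.$$ Then $$2\le \frac{3n+2-3\delta_2(G)}{n+1-\delta_2(G)}\le av_1(G)\le \frac{n+4-\delta_1(G)}{2}\le\frac{n+2}{2}.$$
   Context: All graphs are finite and simple. For a graph $G=(V,E)$, a set $S\subseteq V$ is a $1$-nearly independent vertex set if the subgraph induced by $S$ has exactly one edge. $\sigma_1(G)$ is the number of such sets, $S_1(G)$ the sum of their sizes, and $av_1(G)=S_1(G)/\sigma_1(G)$. $N(v)$ is the set of neighbours of $v$. *)

theory Defs
  imports Complex_Main
begin

definition simple_graph :: "'a set \<Rightarrow> ('a \<Rightarrow> 'a \<Rightarrow> bool) \<Rightarrow> bool" where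
  "simple_graph V E \<longleftrightarrow> finite V \<and> (\<forall>u v. E u v \<longrightarrow> u \<in> V \<and> v \<in> V)
     \<and> (\<forall>u v. E u v \<longrightarrow> E v u) \<and> (\<forall>v. \<not> E v v)"

definition nbhd :: "'a set \<Rightarrow> ('a \<Rightarrow> 'a \<Rightarrow> bool) \<Rightarrow> 'a \<Rightarrow> 'a set" where
  "nbhd V E v = {u \<in> V. E v u}"

definition edges :: "'a set \<Rightarrow> ('a \<Rightarrow> 'a \<Rightarrow> bool) \<Rightarrow> 'a set set" where
  "edges V E = {{u, v} | u v. u \<in> V \<and> v \<in> V \<and> E u v}"

definition induced_edges :: "('a \<Rightarrow> 'a \<Rightarrow> bool) \<Rightarrow> 'a set \<Rightarrow> 'a set set" where
  "induced_edges E S = {{u, v} | u v. u \<in> S \<and> v \<in> S \<and> E u v}"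

definition nearly_indep_sets :: "'a set \<Rightarrow> ('a \<Rightarrow> 'a \<Rightarrow> bool) \<Rightarrow> 'a set set" where
  "nearly_indep_sets V E = {S. S \<subseteq> V \<and> card (induced_edges E S) = 1}"

definition sigma1 :: "'a set \<Rightarrow> ('a \<Rightarrow> 'a \<Rightarrow> bool) \<Rightarrow> nat" where
  "sigma1 V E = card (nearly_indep_sets V E)"

definition S1 :: "'a set \<Rightarrow> ('a \<Rightarrow> 'a \<Rightarrow> bool) \<Rightarrow> nat" where
  "S1 V E = (\<Sum>S\<in>nearly_indep_sets V E. card S)"

definition av1 :: "'a set \<Rightarrow> ('a \<Rightarrow> 'a \<Rightarrow> bool) \<Rightarrow> real" where
  "av1 V E = real (S1 V E) / real (sigma1 V E)"

definition delta1 :: "'a set \<Rightarrow> ('a \<Rightarrow> 'a \<Rightarrow> bool) \<Rightarrow> nat" where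
  "delta1 V E = Min {card (nbhd V E u \<union> nbhd V E v) | u v. u \<in> V \<and> v \<in> V \<and> E u v}"

definition delta2 :: "'a set \<Rightarrow> ('a \<Rightarrow> 'a \<Rightarrow> bool) \<Rightarrow> nat" where
  "delta2 V E = Max {card (nbhd V E u \<union> nbhd V E v) | u v. u \<in> V \<and> v \<in> V \<and> E u v}"

end

theory Submission
  imports Defs
begin

(* Group the 1-nearly independent sets by their unique edge uv.  The sets in the class of uv
   are {u, v} together with an independent subset of the set W of vertices adjacent to
   neither u nor v, and |W| = n - |N(u) \<union> N(v)|.  The class has at least |W| + 1 members
   ({u, v} and the triples {u, v, w}) and all of them except {u, v} have at least three
   elements; this bounds the average size in the class from below by 3 - 1/(|W| + 1).
   Deleting a vertex w \<in> W maps the members containing w injectively to those avoiding it,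
   so w lies in at most half of them and the average size is at most 2 + |W|/2.
   Finally, a ratio of sums lies between the extreme ratios of its summands. *)

lemma le_sum_divide_sum:
  fixes s c :: "'i \<Rightarrow> real"
  assumes "0 < sum c I" and "\<And>i. i \<in> I \<Longrightarrow> a * c i \<le> s i"
  shows "a \<le> sum s I / sum c I"
proof -
  have "a * sum c I = (\<Sum>i\<in>I. a * c i)" by (simp add: sum_distrib_left)
  also have "\<dots> \<le> sum s I" using assms(2) by (rule sum_mono)
  finally show ?thesis using assms(1) by (simp add: pos_le_divide_eq)
qed

lemma sum_divide_sum_le:
  fixes s c :: "'i \<Rightarrow> real"
  assumes "0 < sum c I" and "\<And>i. i \<in> I \<Longrightarrow> s i \<le> b * c i"
  shows "sum s I / sum c I \<le> b"
proof -
  have "sum s I \<le> (\<Sum>i\<in>I. b * c i)" using assms(2) by (rule sum_mono)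
  also have "\<dots> = b * sum c I" by (simp add: sum_distrib_left)
  finally show ?thesis using assms(1) by (simp add: pos_divide_le_eq)
qed

lemma sum_card_Int_eq_sum_card_containing:
  assumes "finite \<F>" and "finite W"
  shows "(\<Sum>S\<in>\<F>. card (S \<inter> W)) = (\<Sum>w\<in>W. card {S \<in> \<F>. w \<in> S})"
proof -
  have "(\<Sum>S\<in>\<F>. card (S \<inter> W)) = (\<Sum>S\<in>\<F>. \<Sum>w\<in>W. if w \<in> S then 1 else 0)"
    using assms(2) by (simp add: sum.If_cases Int_commute)
  also have "\<dots> = (\<Sum>w\<in>W. \<Sum>S\<in>\<F>. if w \<in> S then 1 else 0)" by (rule sum.swap)
  also have "\<dots> = (\<Sum>w\<in>W. card {S \<in> \<F>. w \<in> S})"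
    using assms(1) by (simp add: sum.If_cases Int_def)
  finally show ?thesis .
qed

definition nearly_indep_sets_at :: "'a set \<Rightarrow> ('a \<Rightarrow> 'a \<Rightarrow> bool) \<Rightarrow> 'a set \<Rightarrow> 'a set set" where
  "nearly_indep_sets_at V E e = {S. S \<subseteq> V \<and> induced_edges E S = {e}}"

locale finite_simple_graph =
  fixes V :: "'a set" and E :: "'a \<Rightarrow> 'a \<Rightarrow> bool"
  assumes simple_graph: "simple_graph V E"
begin

lemma finite_vertices: "finite V"
  and adj_sym: "E a b \<Longrightarrow> E b a"
  and adj_irrefl: "\<not> E a a"
  and adj_in_vertices: "E a b \<Longrightarrow> a \<in> V \<and> b \<in> V"
  using simple_graph unfolding simple_graph_def by blast+

lemma finite_edges: "finite (edges V E)"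
proof -
  have "edges V E \<subseteq> Pow V" unfolding edges_def by auto
  then show ?thesis using finite_vertices by (simp add: finite_subset)
qed

lemma card_nbhd_Un_bounds:
  assumes "E u v"
  shows "2 \<le> card (nbhd V E u \<union> nbhd V E v)" and "card (nbhd V E u \<union> nbhd V E v) \<le> card V"
proof -
  have sub: "nbhd V E u \<union> nbhd V E v \<subseteq> V" unfolding nbhd_def by auto
  have "{u, v} \<subseteq> nbhd V E u \<union> nbhd V E v"
    using assms adj_sym adj_in_vertices unfolding nbhd_def by auto
  then have "card {u, v} \<le> card (nbhd V E u \<union> nbhd V E v)"
    using sub finite_vertices by (meson card_mono finite_subset)
  then show "2 \<le> card (nbhd V E u \<union> nbhd V E v)"
    using assms adj_irrefl by (cases "u = v") auto
  show "card (nbhd V E u \<union> nbhd V E v) \<le> card V"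
    using sub finite_vertices by (rule card_mono[rotated])
qed

lemma delta_bounds:
  assumes "E u v"
  shows "2 \<le> delta1 V E" and "delta1 V E \<le> card (nbhd V E u \<union> nbhd V E v)"
    and "card (nbhd V E u \<union> nbhd V E v) \<le> delta2 V E" and "delta2 V E \<le> card V"
proof -
  define D where "D = {card (nbhd V E a \<union> nbhd V E b) | a b. a \<in> V \<and> b \<in> V \<and> E a b}"
  have D_bounds: "2 \<le> d \<and> d \<le> card V" if "d \<in> D" for d
    using that card_nbhd_Un_bounds unfolding D_def by blast
  then have "finite D" by (meson atLeastAtMost_iff finite_atLeastAtMost finite_subset subsetI)
  have mem: "card (nbhd V E u \<union> nbhd V E v) \<in> D"
    using assms adj_in_vertices unfolding D_def by blast
  then have "D \<noteq> {}" by blast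
  show "2 \<le> delta1 V E" "delta2 V E \<le> card V"
    using D_bounds Min_in[OF \<open>finite D\<close> \<open>D \<noteq> {}\<close>] Max_in[OF \<open>finite D\<close> \<open>D \<noteq> {}\<close>]
    unfolding delta1_def delta2_def D_def by blast+
  show "delta1 V E \<le> card (nbhd V E u \<union> nbhd V E v)"
    "card (nbhd V E u \<union> nbhd V E v) \<le> delta2 V E"
    using Min_le[OF \<open>finite D\<close> mem] Max_ge[OF \<open>finite D\<close> mem]
    unfolding delta1_def delta2_def D_def by simp_all
qed

lemma nearly_indep_sets_eq_UN:
  "nearly_indep_sets V E = (\<Union>e\<in>edges V E. nearly_indep_sets_at V E e)"
proof
  show "nearly_indep_sets V E \<subseteq> (\<Union>e\<in>edges V E. nearly_indep_sets_at V E e)"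
  proof
    fix S assume "S \<in> nearly_indep_sets V E"
    then have S: "S \<subseteq> V" "card (induced_edges E S) = 1" unfolding nearly_indep_sets_def by auto
    from S(2) obtain e where e: "induced_edges E S = {e}" by (rule card_1_singletonE)
    then have "e \<in> induced_edges E S" by simp
    then have "e \<in> edges V E" using S(1) unfolding edges_def induced_edges_def by blast
    then show "S \<in> (\<Union>e\<in>edges V E. nearly_indep_sets_at V E e)"
      using S e unfolding nearly_indep_sets_at_def by blast
  qed
  show "(\<Union>e\<in>edges V E. nearly_indep_sets_at V E e) \<subseteq> nearly_indep_sets V E"
    unfolding nearly_indep_sets_at_def nearly_indep_sets_def by auto
qed

lemma finite_nearly_indep_sets_at: "finite (nearly_indep_sets_at V E e)"
proof -
  have "nearly_indep_sets_at V E e \<subseteq> Pow V" unfolding nearly_indep_sets_at_def by auto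
  then show ?thesis using finite_vertices by (simp add: finite_subset)
qed

lemma
  shows sigma1_eq_sum: "sigma1 V E = (\<Sum>e\<in>edges V E. card (nearly_indep_sets_at V E e))"
    and S1_eq_sum: "S1 V E = (\<Sum>e\<in>edges V E. \<Sum>S\<in>nearly_indep_sets_at V E e. card S)"
proof -
  have disj: "\<forall>e\<in>edges V E. \<forall>e'\<in>edges V E. e \<noteq> e' \<longrightarrow>
      nearly_indep_sets_at V E e \<inter> nearly_indep_sets_at V E e' = {}"
    unfolding nearly_indep_sets_at_def by auto
  show "sigma1 V E = (\<Sum>e\<in>edges V E. card (nearly_indep_sets_at V E e))"
    unfolding sigma1_def nearly_indep_sets_eq_UN
    using finite_edges finite_nearly_indep_sets_at disj by (simp add: card_UN_disjoint)
  show "S1 V E = (\<Sum>e\<in>edges V E. \<Sum>S\<in>nearly_indep_sets_at V E e. card S)"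
    unfolding S1_def nearly_indep_sets_eq_UN
    using finite_edges finite_nearly_indep_sets_at disj by (simp add: sum.UNION_disjoint)
qed

end

locale graph_edge = finite_simple_graph +
  fixes u v :: 'a
  assumes adj_uv: "E u v"
begin

abbreviation "C \<equiv> nearly_indep_sets_at V E {u, v}"

definition far_vertices :: "'a set" where
  "far_vertices = V - (nbhd V E u \<union> nbhd V E v)"

abbreviation "W \<equiv> far_vertices"

lemma endpoints: "u \<in> V" "v \<in> V" "u \<noteq> v"
  using adj_in_vertices[OF adj_uv] adj_uv adj_irrefl by auto

lemma far_vertexD: "w \<in> W \<Longrightarrow> w \<in> V \<and> w \<noteq> u \<and> w \<noteq> v \<and> \<not> E u w \<and> \<not> E v w"
  using adj_uv adj_sym endpoints unfolding far_vertices_def nbhd_def by auto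

lemma finite_far_vertices: "finite W"
  using finite_vertices unfolding far_vertices_def by auto

lemma card_far_vertices: "card W = card V - card (nbhd V E u \<union> nbhd V E v)"
proof -
  have "nbhd V E u \<union> nbhd V E v \<subseteq> V" unfolding nbhd_def by auto
  then show ?thesis
    unfolding far_vertices_def using finite_vertices by (meson card_Diff_subset finite_subset)
qed

lemma class_memD:
  assumes "S \<in> C"
  shows "u \<in> S" "v \<in> S" "S \<subseteq> V"
proof -
  have "{u, v} \<in> induced_edges E S" and "S \<subseteq> V"
    using assms unfolding nearly_indep_sets_at_def by auto
  then obtain a b where "{u, v} = {a, b}" "a \<in> S" "b \<in> S" unfolding induced_edges_def by auto
  then show "u \<in> S" "v \<in> S" by (metis doubleton_eq_iff)+
  show "S \<subseteq> V" by fact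
qed

lemma class_Diff_endpoints_subset: "S \<in> C \<Longrightarrow> S - {u, v} \<subseteq> W"
proof
  fix w assume S: "S \<in> C" and w: "w \<in> S - {u, v}"
  have edges_S: "induced_edges E S = {{u, v}}" using S unfolding nearly_indep_sets_at_def by auto
  have "\<not> E x w" if "x \<in> {u, v}" for x
  proof
    assume "E x w"
    then have "{x, w} \<in> induced_edges E S"
      using that class_memD[OF S] w unfolding induced_edges_def by blast
    then show False using edges_S that w by (auto simp: doubleton_eq_iff)
  qed
  then show "w \<in> W"
    using w class_memD[OF S] adj_sym unfolding far_vertices_def nbhd_def by auto
qed

lemma class_Diff_mem: "S \<in> C \<Longrightarrow> w \<notin> {u, v} \<Longrightarrow> S - {w} \<in> C"
proof -
  assume S: "S \<in> C" and w: "w \<notin> {u, v}"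
  have "induced_edges E (S - {w}) \<subseteq> induced_edges E S" unfolding induced_edges_def by blast
  moreover have "{u, v} \<in> induced_edges E (S - {w})"
    using class_memD[OF S] w adj_uv unfolding induced_edges_def by blast
  ultimately show ?thesis using S unfolding nearly_indep_sets_at_def by auto
qed

lemma pair_mem_class: "{u, v} \<in> C"
proof -
  have "induced_edges E {u, v} = {{u, v}}"
    unfolding induced_edges_def using adj_uv adj_irrefl by blast
  then show ?thesis using endpoints unfolding nearly_indep_sets_at_def by auto
qed

lemma triple_mem_class: "w \<in> W \<Longrightarrow> {u, v, w} \<in> C"
proof -
  assume "w \<in> W"
  note w = far_vertexD[OF this]
  have "induced_edges E {u, v, w} = {{u, v}}"
    unfolding induced_edges_def using w adj_uv adj_sym adj_irrefl by blast
  then show ?thesis using w endpoints unfolding nearly_indep_sets_at_def by auto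
qed

lemma card_class_ge: "card W + 1 \<le> card C"
proof -
  have inj: "inj_on (\<lambda>w. {u, v, w}) W"
    by (rule inj_onI) (use far_vertexD in blast)
  have "{u, v} \<notin> (\<lambda>w. {u, v, w}) ` W" using far_vertexD by auto
  then have "card (insert {u, v} ((\<lambda>w. {u, v, w}) ` W)) = card W + 1"
    using card_image[OF inj] finite_far_vertices by simp
  moreover have "insert {u, v} ((\<lambda>w. {u, v, w}) ` W) \<subseteq> C"
    using pair_mem_class triple_mem_class by auto
  ultimately show ?thesis by (metis card_mono finite_nearly_indep_sets_at)
qed

lemma card_class_member: "S \<in> C \<Longrightarrow> card S = 2 + card (S \<inter> W)"
proof -
  assume S: "S \<in> C"
  have "S = {u, v} \<union> (S \<inter> W)" using class_memD[OF S] class_Diff_endpoints_subset[OF S] by blast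
  moreover have "card ({u, v} \<union> (S \<inter> W)) = card {u, v} + card (S \<inter> W)"
    by (rule card_Un_disjoint) (use far_vertexD finite_far_vertices in auto)
  ultimately show ?thesis using endpoints by simp
qed

lemma class_card_sum_ge: "3 * card C \<le> (\<Sum>S\<in>C. card S) + 1"
proof -
  have "3 \<le> card S" if "S \<in> C - {{u, v}}" for S
  proof -
    have S: "S \<in> C" "S \<noteq> {u, v}" using that by auto
    then obtain w where "w \<in> S \<inter> W"
      using class_memD[OF S(1)] class_Diff_endpoints_subset[OF S(1)] by blast
    then have "1 \<le> card (S \<inter> W)" using finite_far_vertices by (auto simp: Suc_le_eq card_gt_0_iff)
    then show ?thesis using card_class_member[OF S(1)] by simp
  qed
  then have "(\<Sum>S\<in>C - {{u, v}}. 3) \<le> (\<Sum>S\<in>C - {{u, v}}. card S)" by (rule sum_mono)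
  moreover have "(\<Sum>S\<in>C. card S) = 2 + (\<Sum>S\<in>C - {{u, v}}. card S)"
    using pair_mem_class finite_nearly_indep_sets_at endpoints by (simp add: sum.remove)
  moreover have "card (C - {{u, v}}) = card C - 1"
    using pair_mem_class finite_nearly_indep_sets_at by simp
  ultimately show ?thesis using card_class_ge by simp
qed

lemma card_class_containing: "w \<in> W \<Longrightarrow> 2 * card {S \<in> C. w \<in> S} \<le> card C"
proof -
  assume w: "w \<in> W"
  have "inj_on (\<lambda>S. S - {w}) {S \<in> C. w \<in> S}" by (rule inj_onI) blast
  moreover have "(\<lambda>S. S - {w}) ` {S \<in> C. w \<in> S} \<subseteq> {S \<in> C. w \<notin> S}"
  proof (rule image_subsetI)
    fix S assume "S \<in> {S \<in> C. w \<in> S}"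
    then show "S - {w} \<in> {S \<in> C. w \<notin> S}" using class_Diff_mem far_vertexD[OF w] by blast
  qed
  ultimately have "card {S \<in> C. w \<in> S} \<le> card {S \<in> C. w \<notin> S}"
    by (rule card_inj_on_le) (simp add: finite_nearly_indep_sets_at)
  moreover have "card C = card {S \<in> C. w \<in> S} + card {S \<in> C. w \<notin> S}"
    using card_Int_Diff[OF finite_nearly_indep_sets_at, where B = "{S. w \<in> S}"]
    by (simp add: Int_def set_diff_eq)
  ultimately show ?thesis by linarith
qed

lemma class_card_sum_le: "2 * (\<Sum>S\<in>C. card S) \<le> card C * (card W + 4)"
proof -
  have "(\<Sum>S\<in>C. card S) = (\<Sum>S\<in>C. 2 + card (S \<inter> W))" using card_class_member by simp
  also have "\<dots> = (\<Sum>S\<in>C. 2) + (\<Sum>S\<in>C. card (S \<inter> W))" by (rule sum.distrib)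
  also have "\<dots> = 2 * card C + (\<Sum>w\<in>W. card {S \<in> C. w \<in> S})"
    using finite_nearly_indep_sets_at finite_far_vertices
    by (simp add: sum_card_Int_eq_sum_card_containing)
  finally have "2 * (\<Sum>S\<in>C. card S) = 4 * card C + (\<Sum>w\<in>W. 2 * card {S \<in> C. w \<in> S})"
    by (simp add: sum_distrib_left)
  moreover have "(\<Sum>w\<in>W. 2 * card {S \<in> C. w \<in> S}) \<le> (\<Sum>w\<in>W. card C)"
    using card_class_containing by (rule sum_mono)
  ultimately show ?thesis by (simp add: algebra_simps)
qed

lemma class_card_sum_lower_bound:
  "(3 - 1 / (real (card W) + 1)) * card C \<le> real (\<Sum>S\<in>C. card S)"
proof -
  have "card C / (real (card W) + 1) \<ge> 1" using card_class_ge by simp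
  then have "(3 - 1 / (real (card W) + 1)) * card C \<le> 3 * card C - 1" by (simp add: algebra_simps)
  also have "\<dots> \<le> real (\<Sum>S\<in>C. card S)" using class_card_sum_ge by linarith
  finally show ?thesis .
qed

lemma class_card_sum_upper_bound:
  "real (\<Sum>S\<in>C. card S) \<le> (real (card W) + 4) / 2 * card C"
proof -
  have "real (2 * (\<Sum>S\<in>C. card S)) \<le> real (card C * (card W + 4))"
    using class_card_sum_le by (simp only: of_nat_le_iff)
  then show ?thesis by (simp add: mult.commute)
qed

end

context finite_simple_graph
begin

lemma nearly_indep_sets_at_card_sum_bounds:
  assumes "e \<in> edges V E"
  defines "n \<equiv> card V" and "\<C> \<equiv> nearly_indep_sets_at V E e"
  shows "(3 - 1 / (real n + 1 - real (delta2 V E))) * card \<C> \<le> real (\<Sum>S\<in>\<C>. card S)"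
    and "real (\<Sum>S\<in>\<C>. card S) \<le> (real n + 4 - real (delta1 V E)) / 2 * card \<C>"
proof -
  obtain u v where "E u v" and e: "e = {u, v}" using assms(1) unfolding edges_def by blast
  interpret graph_edge V E u v by unfold_locales fact
  note \<delta> = delta_bounds[OF \<open>E u v\<close>] card_nbhd_Un_bounds[OF \<open>E u v\<close>]
  have W_ge: "real n - real (delta2 V E) \<le> real (card W)"
    and W_le: "real (card W) \<le> real n - real (delta1 V E)"
    using card_far_vertices \<delta> unfolding n_def by (simp_all add: of_nat_diff)
  have "1 / (real (card W) + 1) \<le> 1 / (real n + 1 - real (delta2 V E))"
    using W_ge \<delta>(4) unfolding n_def by (intro divide_left_mono) auto
  then have "(3 - 1 / (real n + 1 - real (delta2 V E))) * card \<C> \<le> (3 - 1 / (real (card W) + 1)) * card \<C>"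
    by (intro mult_right_mono) auto
  then show "(3 - 1 / (real n + 1 - real (delta2 V E))) * card \<C> \<le> real (\<Sum>S\<in>\<C>. card S)"
    using class_card_sum_lower_bound unfolding \<C>_def e by linarith
  have "(real (card W) + 4) / 2 * card \<C> \<le> (real n + 4 - real (delta1 V E)) / 2 * card \<C>"
    using W_le by (intro mult_right_mono) auto
  then show "real (\<Sum>S\<in>\<C>. card S) \<le> (real n + 4 - real (delta1 V E)) / 2 * card \<C>"
    using class_card_sum_upper_bound unfolding \<C>_def e by linarith
qed

lemma edge_mem_nearly_indep_sets_at:
  assumes "e \<in> edges V E"
  shows "e \<in> nearly_indep_sets_at V E e"
proof -
  obtain u v where "E u v" and e: "e = {u, v}" using assms unfolding edges_def by blast
  interpret graph_edge V E u v by unfold_locales fact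
  show ?thesis unfolding e by (rule pair_mem_class)
qed

end

theorem mainTheorem8:
  fixes V :: "'a set" and E :: "'a \<Rightarrow> 'a \<Rightarrow> bool"
  assumes "simple_graph V E"
    and "edges V E \<noteq> {}"
  defines "n \<equiv> card V"
  shows "2 \<le> (3 * real n + 2 - 3 * real (delta2 V E)) / (real n + 1 - real (delta2 V E))
       \<and> (3 * real n + 2 - 3 * real (delta2 V E)) / (real n + 1 - real (delta2 V E)) \<le> av1 V E
       \<and> av1 V E \<le> (real n + 4 - real (delta1 V E)) / 2
       \<and> (real n + 4 - real (delta1 V E)) / 2 \<le> (real n + 2) / 2"
proof -
  interpret finite_simple_graph V E by unfold_locales fact
  obtain u v where "E u v" using assms(2) unfolding edges_def by blast
  note \<delta> = delta_bounds[OF this, folded n_def]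
  have lower_eq: "(3 * real n + 2 - 3 * real (delta2 V E)) / (real n + 1 - real (delta2 V E))
      = 3 - 1 / (real n + 1 - real (delta2 V E))"
    using \<delta>(4) by (simp add: field_simps)
  have av1_eq: "av1 V E = (\<Sum>e\<in>edges V E. real (\<Sum>S\<in>nearly_indep_sets_at V E e. card S))
      / (\<Sum>e\<in>edges V E. real (card (nearly_indep_sets_at V E e)))"
    unfolding av1_def S1_eq_sum sigma1_eq_sum by simp
  have pos: "0 < (\<Sum>e\<in>edges V E. real (card (nearly_indep_sets_at V E e)))"
    using finite_edges assms(2) edge_mem_nearly_indep_sets_at finite_nearly_indep_sets_at
    by (intro sum_pos) (auto simp: card_gt_0_iff)
  have "3 - 1 / (real n + 1 - real (delta2 V E)) \<le> av1 V E"
    unfolding av1_eq n_def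
    by (rule le_sum_divide_sum[OF pos]) (rule nearly_indep_sets_at_card_sum_bounds(1))
  moreover have "av1 V E \<le> (real n + 4 - real (delta1 V E)) / 2"
    unfolding av1_eq n_def
    by (rule sum_divide_sum_le[OF pos]) (rule nearly_indep_sets_at_card_sum_bounds(2))
  moreover have "1 / (real n + 1 - real (delta2 V E)) \<le> 1" using \<delta>(4) by simp
  moreover have "(real n + 4 - real (delta1 V E)) / 2 \<le> (real n + 2) / 2" using \<delta>(1) by simp
  ultimately show ?thesis unfolding lower_eq by (intro conjI) linarith+
qed

end
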